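(* For every $d\in\mathbb{N}$ there exist non-empty families $\mathcal{F}_1,\dots,\mathcal{F}_{3d-1}$ of axis-parallel boxes in $\mathbb{R}^d$ such that (i) every colorful $(3d-1)$-tuple is $2$-pierceable, and (ii) for each $i\in[3d-1]$, $\mathcal{F}_i$ is not $2$-pierceable.
   Context: An axis-parallel box in $\mathbb{R}^d$ is a set $[\alpha_1,\beta_1]\times\dots\times[\alpha_d,\beta_d]$ with real $\alpha_j\le\beta_j$. A family is $2$-pierceable if some set of at most $2$ points meets every member. A colorful $(3d-1)$-tuple from $\mathcal{F}_1,\dots,\mathcal{F}_{3d-1}$ is a tuple containing exactly one member from each family (with distinct family indices). *)

theory Defs
  imports "HOL-Analysis.Analysis"
begin

definition axis_box :: "(real^'n) set \<Rightarrow> bool" where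
  "axis_box B \<longleftrightarrow> (\<exists>a b. (\<forall>j. a$j \<le> b$j) \<and> B = cbox a b)"

definition pierceable :: "nat \<Rightarrow> 'a set set \<Rightarrow> bool" where
  "pierceable k F \<longleftrightarrow> (\<exists>P. finite P \<and> card P \<le> k \<and> (\<forall>B\<in>F. P \<inter> B \<noteq> {}))"

end

theory Submission
  imports Defs
begin

(* All boxes lie in the cube [0,6]^d.  For every coordinate j there is a family of three
   parallel sections x_j = 0, 1, 2 and one of sections x_j = 4, 5, 6; for a fixed coordinate c
   and every j \<noteq> c there is a family of three prisms whose projections to the
   (x_c, x_j)-plane are the squares [0,2]^2, [4,6]^2 and [0,2] \<times> [4,6].  Each family has three
   pairwise disjoint members, so it is not 2-pierceable.  A colourful choice picks sections
   x_j = u_j and x_j = v_j with u_j \<in> [0,2] and v_j \<in> [4,6]; let A be the set of j whose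
   prism is the one over [0,2] \<times> [4,6].  The point p with p_j = v_j on A and p_j = u_j off A,
   and the point q with the roles of u and v exchanged, together meet every chosen section;
   p meets the chosen prisms over [0,2]^2 and [0,2] \<times> [4,6], and q those over [4,6]^2. *)

definition slab :: "'n::finite \<Rightarrow> real \<Rightarrow> (real^'n) set" where
  "slab j t = cbox (\<chi> k. if k = j then t else 0) (\<chi> k. if k = j then t else 6)"

definition prism :: "'n::finite \<Rightarrow> 'n \<Rightarrow> real \<Rightarrow> real \<Rightarrow> (real^'n) set" where
  "prism c j a b = cbox (\<chi> k. if k = c then a else if k = j then b else 0)
                        (\<chi> k. if k = c then a + 2 else if k = j then b + 2 else 6)"

lemma mem_slab: "x \<in> slab j t \<longleftrightarrow> x$j = t \<and> (\<forall>k. k \<noteq> j \<longrightarrow> 0 \<le> x$k \<and> x$k \<le> 6)"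
  unfolding slab_def mem_box_cart by (simp add: if_bool_eq_conj all_conj_distrib eq_iff)

lemma mem_prism:
  assumes "c \<noteq> j"
  shows "x \<in> prism c j a b \<longleftrightarrow> a \<le> x$c \<and> x$c \<le> a + 2 \<and> b \<le> x$j \<and> x$j \<le> b + 2 \<and>
           (\<forall>k. k \<noteq> c \<and> k \<noteq> j \<longrightarrow> 0 \<le> x$k \<and> x$k \<le> 6)"
  using assms unfolding prism_def mem_box_cart
  by (simp add: if_bool_eq_conj all_conj_distrib) (auto simp: imp_conjR)

lemma axis_box_cbox: "(\<And>j. a$j \<le> b$j) \<Longrightarrow> axis_box (cbox a b)"
  unfolding axis_box_def by blast

lemma axis_box_slab: "axis_box (slab j t)"
  unfolding slab_def by (rule axis_box_cbox) simp

lemma axis_box_prism: "axis_box (prism c j a b)"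
  unfolding prism_def by (rule axis_box_cbox) simp

lemma not_pierceable_2_if_three_disjoint:
  assumes "A \<in> F" "B \<in> F" "C \<in> F" "A \<inter> B = {}" "A \<inter> C = {}" "B \<inter> C = {}"
  shows "\<not> pierceable 2 F"
proof
  assume "pierceable 2 F"
  then obtain P where P: "finite P" "card P \<le> 2" "\<forall>X\<in>F. P \<inter> X \<noteq> {}"
    unfolding pierceable_def by blast
  obtain a where "a \<in> P" "a \<in> A" using P(3) assms(1) by blast
  obtain b where "b \<in> P" "b \<in> B" using P(3) assms(2) by blast
  obtain c where "c \<in> P" "c \<in> C" using P(3) assms(3) by blast
  have "a \<noteq> b" "a \<noteq> c" "b \<noteq> c"
    using assms(4-6) \<open>a \<in> A\<close> \<open>b \<in> B\<close> \<open>c \<in> C\<close> by blast+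
  then have "card {a, b, c} = 3"
    by simp
  moreover have "card {a, b, c} \<le> card P"
    using P(1) \<open>a \<in> P\<close> \<open>b \<in> P\<close> \<open>c \<in> P\<close> by (intro card_mono) auto
  ultimately show False
    using P(2) by simp
qed

lemma pierceable_2_if_two_points: "(\<And>X. X \<in> F \<Longrightarrow> p \<in> X \<or> q \<in> X) \<Longrightarrow> pierceable 2 F"
  unfolding pierceable_def by (rule exI[of _ "{p, q}"]) (auto simp: card_insert_if)

datatype 'n colour = Low 'n | High 'n | Cross 'n

definition colours :: "'n \<Rightarrow> 'n colour set" where
  "colours c = range Low \<union> range High \<union> Cross ` (- {c})"

fun family :: "'n::finite \<Rightarrow> 'n colour \<Rightarrow> (real^'n) set set" where
  "family c (Low j) = slab j ` {0, 1, 2}"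
| "family c (High j) = slab j ` {4, 5, 6}"
| "family c (Cross j) = {prism c j 0 0, prism c j 4 4, prism c j 0 4}"

lemma card_colours: "card (colours (c :: 'n::finite)) = 3 * CARD('n) - 1"
proof -
  have "card (colours c) = card (range (Low :: 'n \<Rightarrow> _)) + card (range (High :: 'n \<Rightarrow> _))
      + card (Cross ` (- {c}))"
    unfolding colours_def by (subst card_Un_disjoint; auto simp: card_Un_disjoint)+
  also have "\<dots> = CARD('n) + CARD('n) + (CARD('n) - 1)"
    by (simp add: card_image inj_on_def Compl_eq_Diff_UNIV card_Diff_singleton)
  finally show ?thesis by simp
qed

lemma family_nonempty: "family c l \<noteq> {}"
  by (cases l) auto

lemma family_axis_boxes: "B \<in> family c l \<Longrightarrow> axis_box B"
  by (cases l) (auto simp: axis_box_slab axis_box_prism)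

lemma family_not_pierceable_2:
  assumes "l \<in> colours c"
  shows "\<not> pierceable 2 (family c l)"
proof (cases l)
  case (Low j)
  show ?thesis unfolding Low
    by (intro not_pierceable_2_if_three_disjoint[of "slab j 0" _ "slab j 1" "slab j 2"])
      (auto simp: mem_slab)
next
  case (High j)
  show ?thesis unfolding High
    by (intro not_pierceable_2_if_three_disjoint[of "slab j 4" _ "slab j 5" "slab j 6"])
      (auto simp: mem_slab)
next
  case (Cross j)
  with assms have "c \<noteq> j" by (auto simp: colours_def)
  then show ?thesis unfolding Cross
    by (intro not_pierceable_2_if_three_disjoint[of "prism c j 0 0" _ "prism c j 4 4"
          "prism c j 0 4"])
      (auto simp: mem_prism)
qed

definition mix :: "'n set \<Rightarrow> ('n \<Rightarrow> real) \<Rightarrow> ('n \<Rightarrow> real) \<Rightarrow> real^'n::finite" where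
  "mix A u v = (\<chi> j. if j \<in> A then v j else u j)"

lemma mix_mem_slab:
  assumes "\<And>k. 0 \<le> u k \<and> u k \<le> 6" "\<And>k. 0 \<le> v k \<and> v k \<le> 6"
  shows "mix A u v \<in> slab j (u j) \<or> mix A v u \<in> slab j (u j)"
  using assms by (auto simp: mix_def mem_slab)

lemma mix_mem_prism:
  assumes "\<And>k. 0 \<le> u k \<and> u k \<le> 2" "\<And>k. 4 \<le> v k \<and> v k \<le> 6" "c \<notin> A" "c \<noteq> j"
  shows "j \<notin> A \<Longrightarrow> mix A u v \<in> prism c j 0 0"
    and "j \<notin> A \<Longrightarrow> mix A v u \<in> prism c j 4 4"
    and "j \<in> A \<Longrightarrow> mix A u v \<in> prism c j 0 4"
  using assms by (auto simp: mix_def mem_prism) (smt (verit))+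

lemma colourful_pierceable_2:
  assumes g: "\<forall>l\<in>colours c. g l \<in> family c l"
  shows "pierceable 2 (g ` colours c)"
proof -
  have "g (Low j) \<in> slab j ` {0, 1, 2}" "g (High j) \<in> slab j ` {4, 5, 6}" for j
    using g[rule_format, of "Low j"] g[rule_format, of "High j"] by (simp_all add: colours_def)
  then have "\<forall>j. \<exists>t. t \<in> {0, 1, 2} \<and> g (Low j) = slab j t"
        and "\<forall>j. \<exists>t. t \<in> {4, 5, 6} \<and> g (High j) = slab j t"
    by blast+
  then obtain u v where u: "\<forall>j. u j \<in> {0, 1, 2} \<and> g (Low j) = slab j (u j)"
                    and v: "\<forall>j. v j \<in> {4, 5, 6} \<and> g (High j) = slab j (v j)"
    by (metis choice)
  have u02: "0 \<le> u j \<and> u j \<le> 2" and v46: "4 \<le> v j \<and> v j \<le> 6" for j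
    using u[rule_format, of j] v[rule_format, of j] by auto
  have u06: "0 \<le> u j \<and> u j \<le> 6" and v06: "0 \<le> v j \<and> v j \<le> 6" for j
    using u02[of j] v46[of j] by auto
  define A where "A = {j. j \<noteq> c \<and> g (Cross j) = prism c j 0 4}"
  have "c \<notin> A" by (simp add: A_def)
  show ?thesis
  proof (rule pierceable_2_if_two_points)
    fix X assume "X \<in> g ` colours c"
    then obtain l where l: "l \<in> colours c" "X = g l" by blast
    show "mix A u v \<in> X \<or> mix A v u \<in> X"
    proof (cases l)
      case (Low j)
      then show ?thesis using l u mix_mem_slab[of u v, OF u06 v06] by auto
    next
      case (High j)
      then show ?thesis using l v mix_mem_slab[of v u, OF v06 u06] by auto
    next
      case (Cross j)
      with l(1) have "c \<noteq> j"
        by (auto simp: colours_def)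
      note prisms = mix_mem_prism[of u v, OF u02 v46 \<open>c \<notin> A\<close> this]
      have X: "X \<in> {prism c j 0 0, prism c j 4 4, prism c j 0 4}"
        using g[rule_format, OF l(1)] l(2) Cross by simp
      show ?thesis
      proof (cases "j \<in> A")
        case True
        then have "X = prism c j 0 4"
          using l(2) Cross by (simp add: A_def)
        with True show ?thesis
          using prisms(3) by simp
      next
        case False
        then have "X = prism c j 0 0 \<or> X = prism c j 4 4"
          using X l(2) Cross \<open>c \<noteq> j\<close> by (auto simp: A_def)
        with False show ?thesis
          using prisms(1,2) by auto
      qed
    qed
  qed
qed

lemma colourful_reindex:
  assumes "bij_betw \<sigma> I L" "\<forall>i\<in>I. f i \<in> G (\<sigma> i)"
    and "\<And>g. \<forall>l\<in>L. g l \<in> G l \<Longrightarrow> P (g ` L)"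
  shows "P (f ` I)"
proof -
  let ?g = "f \<circ> inv_into I \<sigma>"
  have "\<forall>l\<in>L. ?g l \<in> G l"
    using assms(1,2) by (auto simp: bij_betw_def inv_into_into f_inv_into_f)
  moreover have "?g ` L = f ` (inv_into I \<sigma> ` L)"
    by (simp add: image_comp)
  with bij_betw_imp_surj_on[OF bij_betw_inv_into[OF assms(1)]] have "?g ` L = f ` I"
    by simp
  ultimately show ?thesis
    using assms(3)[of ?g] by simp
qed

theorem theorem9:
  shows "\<exists>F :: nat \<Rightarrow> (real^'n::finite) set set.
     (\<forall>i\<in>{1..3 * CARD('n) - 1}. F i \<noteq> {} \<and> (\<forall>B\<in>F i. axis_box B))
   \<and> (\<forall>f. (\<forall>i\<in>{1..3 * CARD('n) - 1}. f i \<in> F i)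
          \<longrightarrow> pierceable 2 (f ` {1..3 * CARD('n) - 1}))
   \<and> (\<forall>i\<in>{1..3 * CARD('n) - 1}. \<not> pierceable 2 (F i))"
proof -
  fix c :: 'n
  define I where "I = {1..3 * CARD('n) - 1}"
  have "finite (colours c)"
    by (simp add: colours_def)
  obtain \<sigma> where \<sigma>: "bij_betw \<sigma> I (colours c)"
    using ex_bij_betw_nat_finite_1[OF \<open>finite (colours c)\<close>] by (auto simp: I_def card_colours)
  have boxes: "family c (\<sigma> i) \<noteq> {} \<and> (\<forall>B\<in>family c (\<sigma> i). axis_box B)" for i
    using family_nonempty family_axis_boxes by blast
  have colourful: "pierceable 2 (f ` I)" if "\<forall>i\<in>I. f i \<in> family c (\<sigma> i)" for f
    using \<sigma> that colourful_pierceable_2 by (rule colourful_reindex)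
  have "\<not> pierceable 2 (family c (\<sigma> i))" if "i \<in> I" for i
    using that \<sigma> family_not_pierceable_2 by (auto simp: bij_betw_def)
  with boxes colourful show ?thesis
    unfolding I_def by (intro exI[of _ "family c \<circ> \<sigma>"]) auto
qed

end
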